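(* With the construction described in the context, for every fixed $\varepsilon>0$, as $N\to+\infty$, $$\frac{1}{\sum_{n\in\mathbb{N}}f(n)^2}\sum_{n\in\mathbb{N}}\frac{f(n)h(n)}{n^{\sigma}}\sum_{\substack{q\mid n\\ q\le n/N^{\varepsilon}}}f(q)q^{\sigma}=o(\mathcal{A}_N),$$ where the implied rate of convergence depends only on $\varepsilon$.
   Context: Notation: $\log_2 x=\log\log x$, $\log_3 x=\log\log\log x$. Fix $A>0$. Let $N$ be a large parameter and $\sigma=\frac12+\frac{A}{\log_2 N}$. Fix $\gamma\in(0,(e-1)^{-1})$. Let $\mathcal{P}$ be the set of primes $p$ with $e\log N\log_2 N<p\le \exp((\log_2 N)^{\gamma})\log N\log_2 N$. Let $f$ be the multiplicative function supported on squarefree integers (so $f(1)=1$) with $f(p)=\dfrac{(\log N)^{1-\sigma}(\log_2 N)^{\sigma}}{(\log_3 N)^{1-\sigma}}\cdot\dfrac{1}{p^{\sigma}(\log p-\log_2 N-\log_3 N)}$ for $p\in\mathcal{P}$ and $f(p)=0$ for primes $p\notin\mathcal{P}$. Let $h$ be the multiplicative function $h(n)=\prod_{p\mid n}\frac{p}{p+1}$ ($h(1)=1$). Define $$\mathcal{A}_N=\frac{1}{\sum_{n\in\mathbb{N}}f(n)^2}\sum_{n\in\mathbb{N}}\frac{f(n)h(n)}{n^{\sigma}}\sum_{q\mid n}f(q)q^{\sigma}=\prod_{p\in\mathcal{P}}\frac{1+f(p)^2h(p)+f(p)h(p)p^{-\sigma}}{1+f(p)^2}.$$ *)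

theory Defs
  imports "HOL-Analysis.Analysis" "HOL-Computational_Algebra.Computational_Algebra"
    "HOL-Library.Landau_Symbols"
begin

definition sig :: "real \<Rightarrow> real \<Rightarrow> real" where
  "sig A N = 1/2 + A / ln (ln N)"

definition Pset :: "real \<Rightarrow> real \<Rightarrow> nat set" where
  "Pset \<gamma> N = {p. prime p \<and> exp 1 * ln N * ln (ln N) < real p \<and>
      real p \<le> exp (ln (ln N) powr \<gamma>) * ln N * ln (ln N)}"

definition fp :: "real \<Rightarrow> real \<Rightarrow> real \<Rightarrow> nat \<Rightarrow> real" where
  "fp A \<gamma> N p = (if p \<in> Pset \<gamma> N then
      (ln N powr (1 - sig A N) * ln (ln N) powr (sig A N) / ln (ln (ln N)) powr (1 - sig A N))
      * (1 / (real p powr (sig A N) * (ln (real p) - ln (ln N) - ln (ln (ln N)))))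
    else 0)"

text \<open>Multiplicative function supported on squarefree integers (squarefree 0 is False, so value 0 at 0).\<close>
definition fm :: "real \<Rightarrow> real \<Rightarrow> real \<Rightarrow> nat \<Rightarrow> real" where
  "fm A \<gamma> N n = (if squarefree n then (\<Prod>p\<in>prime_factors n. fp A \<gamma> N p) else 0)"

definition hm :: "nat \<Rightarrow> real" where
  "hm n = (\<Prod>p\<in>prime_factors n. real p / (real p + 1))"

definition AN :: "real \<Rightarrow> real \<Rightarrow> real \<Rightarrow> real" where
  "AN A \<gamma> N = (\<Sum>\<^sub>\<infinity>n::nat. fm A \<gamma> N n * hm n / real n powr (sig A N)
        * (\<Sum>q | q dvd n. fm A \<gamma> N q * real q powr (sig A N)))
      / (\<Sum>\<^sub>\<infinity>n::nat. (fm A \<gamma> N n)^2)"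

definition SN :: "real \<Rightarrow> real \<Rightarrow> real \<Rightarrow> real \<Rightarrow> real" where
  "SN A \<gamma> \<epsilon> N = (\<Sum>\<^sub>\<infinity>n::nat. fm A \<gamma> N n * hm n / real n powr (sig A N)
        * (\<Sum>q | q dvd n \<and> real q \<le> real n / N powr \<epsilon>. fm A \<gamma> N q * real q powr (sig A N)))
      / (\<Sum>\<^sub>\<infinity>n::nat. (fm A \<gamma> N n)^2)"

end

theory Submission
  imports Defs "HOL-Real_Asymp.Real_Asymp"
begin

text \<open>Every \<open>n\<close> in the support of \<open>f\<close> is \<open>\<Prod>S\<close> for a subset \<open>S\<close> of the finite set \<open>\<P>\<close>, and its
  divisors are the \<open>\<Prod>T\<close> with \<open>T \<subseteq> S\<close>. Summing over the pairs \<open>T \<subseteq> S\<close>, the unrestricted double sum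
  factors as \<open>\<Prod>\<^sub>p (1 + f(p)\<^sup>2 h(p) + f(p) h(p) p\<^sup>-\<^sup>\<sigma>)\<close>, the numerator of \<open>\<A>\<^sub>N\<close>. Under the
  restriction \<open>q \<le> n / N\<^sup>\<epsilon>\<close> the cofactor \<open>\<Prod>(S - T)\<close> is at least \<open>N\<^sup>\<epsilon>\<close>, so by Rankin's trick the
  restricted sum is at most \<open>N\<^sup>-\<^sup>\<epsilon>\<^sup>\<delta>\<close> times the same product with \<open>p\<^sup>-\<^sup>\<sigma>\<close> replaced by \<open>p\<^sup>\<delta>\<^sup>-\<^sup>\<sigma>\<close>, and
  that product exceeds the unrestricted one by at most \<open>exp (\<Sum>\<^sub>p f(p) h(p) p\<^sup>\<delta>\<^sup>-\<^sup>\<sigma>)\<close>.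
  With \<open>\<delta> = 1 / (2 log\<^sub>2 N)\<close> this sum is \<open>O((log N)\<^sup>3\<^sup>/\<^sup>4 log\<^sub>2 N)\<close>, negligible against
  \<open>\<epsilon> \<delta> log N = \<epsilon> log N / (2 log\<^sub>2 N)\<close>.\<close>

lemma prime_factors_prod_primes:
  assumes "finite S" "\<forall>p\<in>S. prime (p::nat)"
  shows "prime_factors (\<Prod>S) = S"
proof -
  have "prime_factors (prod id S) = \<Union>((prime_factors \<circ> id) ` S)"
    using assms by (intro prime_factors_prod) auto
  also have "\<dots> = S"
    using assms by (auto simp: prime_prime_factors)
  finally show ?thesis by simp
qed

lemma squarefree_prod_primes: "\<forall>p\<in>S. prime (p::nat) \<Longrightarrow> squarefree (\<Prod>S)"
  by (rule squarefree_prod_coprime) (auto simp: primes_coprime squarefree_prime)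

lemma prod_prime_factors_squarefree:
  assumes "squarefree (n::nat)"
  shows "\<Prod>(prime_factors n) = n"
proof -
  have "n \<noteq> 0" using assms by (metis not_squarefree_0)
  then have "\<forall>p\<in>prime_factors n. multiplicity p n = 1"
    using assms squarefree_factorial_semiring' by blast
  then have "\<Prod>(prime_factors n) = (\<Prod>p\<in>prime_factors n. p ^ multiplicity p n)"
    by (intro prod.cong) auto
  also have "\<dots> = n"
    using \<open>n \<noteq> 0\<close> prod_prime_factors[of n] by simp
  finally show ?thesis .
qed

lemma inj_on_prod_Pow_primes:
  assumes "finite S" "\<forall>p\<in>S. prime (p::nat)"
  shows "inj_on \<Prod> (Pow S)"
proof (rule inj_onI)
  fix T U assume "T \<in> Pow S" "U \<in> Pow S" "\<Prod>T = \<Prod>U"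
  with assms show "T = U"
    by (metis PowD finite_subset prime_factors_prod_primes subsetD)
qed

lemma divisors_prod_primes:
  assumes "finite S" "\<forall>p\<in>S. prime (p::nat)"
  shows "{q. q dvd \<Prod>S} = \<Prod> ` Pow S"
proof safe
  fix q assume q: "q dvd \<Prod>S"
  have "\<Prod>S \<noteq> 0"
    using assms by (auto simp: prod_zero_iff)
  then have "prime_factors q \<subseteq> S"
    using dvd_prime_factors[OF _ q] prime_factors_prod_primes[OF assms] by simp
  moreover have "\<Prod>(prime_factors q) = q"
    using squarefree_mono[OF q squarefree_prod_primes[OF assms(2)]]
    by (rule prod_prime_factors_squarefree)
  ultimately show "q \<in> \<Prod> ` Pow S" by (metis Pow_iff image_iff)
next
  fix T assume "T \<subseteq> S"
  then show "\<Prod>T dvd \<Prod>S" using assms(1) by (simp add: prod_dvd_prod_subset)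
qed

lemma sum_dvd_prod_primes:
  assumes "finite S" "\<forall>p\<in>S. prime (p::nat)"
  shows "(\<Sum>q | q dvd \<Prod>S \<and> C q. g q) = (\<Sum>T | T \<subseteq> S \<and> C (\<Prod>T). g (\<Prod>T))"
proof -
  have "q dvd \<Prod>S \<longleftrightarrow> q \<in> \<Prod> ` Pow S" for q
    using divisors_prod_primes[OF assms] by blast
  then have "{q. q dvd \<Prod>S \<and> C q} = \<Prod> ` {T. T \<subseteq> S \<and> C (\<Prod>T)}"
    by auto
  moreover have "inj_on \<Prod> {T. T \<subseteq> S \<and> C (\<Prod>T)}"
    using inj_on_prod_Pow_primes[OF assms] by (rule inj_on_subset) auto
  ultimately show ?thesis by (simp add: sum.reindex)
qed

definition sqf_mult :: "(nat \<Rightarrow> real) \<Rightarrow> nat \<Rightarrow> real" where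
  "sqf_mult F n = (if squarefree n then (\<Prod>p\<in>prime_factors n. F p) else 0)"

lemma fm_eq_sqf_mult: "fm A \<gamma> N = sqf_mult (fp A \<gamma> N)"
  by (simp add: fun_eq_iff fm_def sqf_mult_def)

lemma sqf_mult_prod_primes:
  "finite S \<Longrightarrow> \<forall>p\<in>S. prime (p::nat) \<Longrightarrow> sqf_mult F (\<Prod>S) = (\<Prod>p\<in>S. F p)"
  by (simp add: sqf_mult_def squarefree_prod_primes prime_factors_prod_primes)

lemma hm_prod_primes:
  "finite S \<Longrightarrow> \<forall>p\<in>S. prime (p::nat) \<Longrightarrow> hm (\<Prod>S) = (\<Prod>p\<in>S. real p / (real p + 1))"
  by (simp add: hm_def prime_factors_prod_primes)

lemma sqf_mult_nonzero_imp_prod_Pow: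
  assumes "\<And>p. F p \<noteq> 0 \<Longrightarrow> p \<in> P" "sqf_mult F n \<noteq> 0"
  shows "n \<in> \<Prod> ` Pow P"
proof -
  have "squarefree n" and "(\<Prod>p\<in>prime_factors n. F p) \<noteq> 0"
    using assms(2) by (auto simp: sqf_mult_def split: if_splits)
  then have "prime_factors n \<subseteq> P" and "\<Prod>(prime_factors n) = n"
    using assms(1) by (auto simp: prod_zero_iff prod_prime_factors_squarefree)
  then show ?thesis by (metis Pow_iff image_iff)
qed

lemma infsum_sqf_mult:
  assumes "finite P" "\<forall>p\<in>P. prime (p::nat)" "\<And>p. F p \<noteq> 0 \<Longrightarrow> p \<in> P"
  shows "(\<Sum>\<^sub>\<infinity>n. sqf_mult F n * G n) = (\<Sum>S\<in>Pow P. (\<Prod>p\<in>S. F p) * G (\<Prod>S))"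
proof -
  have "(\<Sum>\<^sub>\<infinity>n. sqf_mult F n * G n) = (\<Sum>n\<in>\<Prod> ` Pow P. sqf_mult F n * G n)"
    using assms(1) sqf_mult_nonzero_imp_prod_Pow[OF assms(3)]
    by (subst infsum_cong_neutral[where T = "\<Prod> ` Pow P"]) auto
  also have "\<dots> = (\<Sum>S\<in>Pow P. sqf_mult F (\<Prod>S) * G (\<Prod>S))"
    using inj_on_prod_Pow_primes[OF assms(1,2)] by (simp add: sum.reindex)
  also have "\<dots> = (\<Sum>S\<in>Pow P. (\<Prod>p\<in>S. F p) * G (\<Prod>S))"
  proof (intro sum.cong refl)
    fix S assume "S \<in> Pow P"
    with assms(1,2) have "finite S" "\<forall>p\<in>S. prime p"
      by (auto intro: finite_subset)
    then show "sqf_mult F (\<Prod>S) * G (\<Prod>S) = (\<Prod>p\<in>S. F p) * G (\<Prod>S)"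
      by (simp add: sqf_mult_prod_primes)
  qed
  finally show ?thesis .
qed

lemma prod_mult_prod_subset:
  assumes "finite S" "T \<subseteq> S"
  shows "(\<Prod>p\<in>S. u p) * (\<Prod>p\<in>T. v p) = (\<Prod>p\<in>T. u p * v p) * (\<Prod>p\<in>S - T. (u p :: real))"
  using prod.subset_diff[OF assms(2,1), of u] by (simp add: prod.distrib ac_simps)

definition divisor_pair_sum :: "(nat \<Rightarrow> real) \<Rightarrow> real \<Rightarrow> (nat \<Rightarrow> nat \<Rightarrow> bool) \<Rightarrow> real" where
  "divisor_pair_sum F s C = (\<Sum>\<^sub>\<infinity>n. sqf_mult F n * hm n / real n powr s
      * (\<Sum>q | q dvd n \<and> C n q. sqf_mult F q * real q powr s))"

lemma divisor_pair_sum_eq_sum_Pow: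
  assumes fin: "finite P" and pr: "\<forall>p\<in>P. prime (p::nat)" and supp: "\<And>p. F p \<noteq> 0 \<Longrightarrow> p \<in> P"
  shows "divisor_pair_sum F s C = (\<Sum>S\<in>Pow P. \<Sum>T | T \<subseteq> S \<and> C (\<Prod>S) (\<Prod>T).
      (\<Prod>p\<in>T. F p ^ 2 * (real p / (real p + 1))) * (\<Prod>p\<in>S - T. F p * (real p / (real p + 1)) / real p powr s))"
proof -
  define G where "G n = hm n / real n powr s * (\<Sum>q | q dvd n \<and> C n q. sqf_mult F q * real q powr s)" for n
  have "divisor_pair_sum F s C = (\<Sum>\<^sub>\<infinity>n. sqf_mult F n * G n)"
    unfolding divisor_pair_sum_def G_def by (simp add: mult.assoc)
  also have "\<dots> = (\<Sum>S\<in>Pow P. (\<Prod>p\<in>S. F p) * G (\<Prod>S))"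
    by (rule infsum_sqf_mult[OF assms])
  also have "\<dots> = (\<Sum>S\<in>Pow P. \<Sum>T | T \<subseteq> S \<and> C (\<Prod>S) (\<Prod>T).
      (\<Prod>p\<in>T. F p ^ 2 * (real p / (real p + 1))) * (\<Prod>p\<in>S - T. F p * (real p / (real p + 1)) / real p powr s))"
  proof (rule sum.cong[OF refl])
    fix S assume "S \<in> Pow P"
    then have fS: "finite S" and pS: "\<forall>p\<in>S. prime p"
      using fin pr by (auto intro: finite_subset)
    define u where "u p = F p * (real p / (real p + 1)) / real p powr s" for p :: nat
    define v where "v p = F p * real p powr s" for p :: nat
    have uv: "u p * v p = F p ^ 2 * (real p / (real p + 1))" if "p \<in> S" for p
      using that pS prime_gt_0_nat[of p] by (simp add: u_def v_def power2_eq_square)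
    have "sqf_mult F (\<Prod>T) * real (\<Prod>T) powr s = (\<Prod>p\<in>T. v p)" if "T \<subseteq> S" for T
      using that fS pS
      by (simp add: sqf_mult_prod_primes v_def prod.distrib prod_powr_distrib finite_subset subset_iff)
    then have "G (\<Prod>S) = (\<Prod>p\<in>S. real p / (real p + 1) / real p powr s)
        * (\<Sum>T | T \<subseteq> S \<and> C (\<Prod>S) (\<Prod>T). \<Prod>p\<in>T. v p)"
      unfolding G_def hm_prod_primes[OF fS pS] sum_dvd_prod_primes[OF fS pS]
      by (simp add: prod_dividef prod_powr_distrib prod.distrib)
    then have "(\<Prod>p\<in>S. F p) * G (\<Prod>S) = (\<Prod>p\<in>S. u p) * (\<Sum>T | T \<subseteq> S \<and> C (\<Prod>S) (\<Prod>T). \<Prod>p\<in>T. v p)"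
      by (simp add: u_def prod.distrib prod_dividef)
    also have "\<dots> = (\<Sum>T | T \<subseteq> S \<and> C (\<Prod>S) (\<Prod>T). (\<Prod>p\<in>T. u p * v p) * (\<Prod>p\<in>S - T. u p))"
      unfolding sum_distrib_left using fS by (intro sum.cong refl prod_mult_prod_subset) auto
    finally show "(\<Prod>p\<in>S. F p) * G (\<Prod>S) = (\<Sum>T | T \<subseteq> S \<and> C (\<Prod>S) (\<Prod>T).
      (\<Prod>p\<in>T. F p ^ 2 * (real p / (real p + 1))) * (\<Prod>p\<in>S - T. F p * (real p / (real p + 1)) / real p powr s))"
      using uv by (simp add: u_def subset_iff cong: prod.cong)
  qed
  finally show ?thesis .
qed

lemma prod_one_add_add:
  fixes a b :: "'a \<Rightarrow> 'b::comm_semiring_1"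
  assumes "finite P"
  shows "(\<Prod>p\<in>P. 1 + a p + b p) = (\<Sum>S\<in>Pow P. \<Sum>T\<in>Pow S. (\<Prod>p\<in>T. a p) * (\<Prod>p\<in>S - T. b p))"
proof -
  have "(\<Prod>p\<in>P. 1 + a p + b p) = (\<Prod>p\<in>P. (a p + b p) + 1)"
    by (simp add: add_ac)
  also have "\<dots> = (\<Sum>S\<in>Pow P. \<Prod>p\<in>S. a p + b p)"
    using prod_add[OF assms, of "\<lambda>p. a p + b p" "\<lambda>_. 1"] by simp
  also have "\<dots> = (\<Sum>S\<in>Pow P. \<Sum>T\<in>Pow S. (\<Prod>p\<in>T. a p) * (\<Prod>p\<in>S - T. b p))"
    using assms by (intro sum.cong refl prod_add) (auto intro: finite_subset)
  finally show ?thesis .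
qed

lemma divisor_pair_sum_unrestricted:
  assumes "finite P" "\<forall>p\<in>P. prime (p::nat)" "\<And>p. F p \<noteq> 0 \<Longrightarrow> p \<in> P"
  shows "divisor_pair_sum F s (\<lambda>_ _. True) = (\<Prod>p\<in>P. 1 + F p ^ 2 * (real p / (real p + 1))
      + F p * (real p / (real p + 1)) / real p powr s)"
  using divisor_pair_sum_eq_sum_Pow[OF assms, where s = s and C = "\<lambda>_ _. True"]
  by (simp add: prod_one_add_add[OF assms(1)] Pow_def)

lemma divisor_pair_sum_nonneg:
  assumes "finite P" "\<forall>p\<in>P. prime (p::nat)" "\<And>p. F p \<noteq> 0 \<Longrightarrow> p \<in> P" "\<And>p. 0 \<le> F p"
  shows "0 \<le> divisor_pair_sum F s C"
  using assms(4)
  by (simp add: divisor_pair_sum_eq_sum_Pow[OF assms(1-3)] sum_nonneg prod_nonneg)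

lemma rankin_factor_ge_one:
  fixes X \<delta> :: real
  assumes "finite S" "T \<subseteq> S" "\<forall>p\<in>S. 0 < (p::nat)" "0 < X" "0 \<le> \<delta>"
    and "real (\<Prod>T) \<le> real (\<Prod>S) / X"
  shows "1 \<le> X powr (-\<delta>) * (\<Prod>p\<in>S - T. real p powr \<delta>)"
proof -
  have "real (\<Prod>S) = real (\<Prod>(S - T)) * real (\<Prod>T)"
    using prod.subset_diff[OF assms(2,1), of id] by simp
  moreover have "0 < real (\<Prod>T)"
    using assms(2,3) by (auto intro!: prod_pos)
  ultimately have "X \<le> real (\<Prod>(S - T))"
    using assms(4,6) by (simp add: field_simps)
  then have "X powr \<delta> \<le> real (\<Prod>(S - T)) powr \<delta>"
    using assms(4,5) by (simp add: powr_mono2)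
  also have "\<dots> = (\<Prod>p\<in>S - T. real p powr \<delta>)"
    by (simp add: prod_powr_distrib)
  finally show ?thesis
    using assms(4) by (simp add: powr_minus field_simps)
qed

lemma divisor_pair_sum_rankin:
  fixes X \<delta> :: real
  assumes fin: "finite P" and pr: "\<forall>p\<in>P. prime (p::nat)" and supp: "\<And>p. F p \<noteq> 0 \<Longrightarrow> p \<in> P"
    and F_nonneg: "\<And>p. 0 \<le> F p" and "0 < X" "0 \<le> \<delta>"
  shows "divisor_pair_sum F s (\<lambda>n q. real q \<le> real n / X) \<le> X powr (-\<delta>) * (\<Prod>p\<in>P.
      1 + F p ^ 2 * (real p / (real p + 1)) + F p * (real p / (real p + 1)) / real p powr s * real p powr \<delta>)"
proof -
  define a where "a p = F p ^ 2 * (real p / (real p + 1))" for p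
  define b where "b p = F p * (real p / (real p + 1)) / real p powr s" for p
  have ab_nonneg: "0 \<le> a p" "0 \<le> b p" for p
    using F_nonneg[of p] by (simp_all add: a_def b_def)
  have "divisor_pair_sum F s (\<lambda>n q. real q \<le> real n / X) =
      (\<Sum>S\<in>Pow P. \<Sum>T | T \<subseteq> S \<and> real (\<Prod>T) \<le> real (\<Prod>S) / X. (\<Prod>p\<in>T. a p) * (\<Prod>p\<in>S - T. b p))"
    by (simp add: divisor_pair_sum_eq_sum_Pow[OF fin pr supp] a_def b_def)
  also have "\<dots> \<le> (\<Sum>S\<in>Pow P. \<Sum>T\<in>Pow S.
      X powr (-\<delta>) * ((\<Prod>p\<in>T. a p) * (\<Prod>p\<in>S - T. b p * real p powr \<delta>)))"
  proof (rule sum_mono)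
    fix S assume "S \<in> Pow P"
    then have fS: "finite S" and pS: "\<forall>p\<in>S. 0 < p"
      using fin pr by (auto intro: finite_subset prime_gt_0_nat)
    have "(\<Prod>p\<in>T. a p) * (\<Prod>p\<in>S - T. b p) \<le> X powr (-\<delta>) * ((\<Prod>p\<in>T. a p) * (\<Prod>p\<in>S - T. b p * real p powr \<delta>))"
      if "T \<subseteq> S" "real (\<Prod>T) \<le> real (\<Prod>S) / X" for T
      using mult_left_mono[OF rankin_factor_ge_one[OF fS that(1) pS \<open>0 < X\<close> \<open>0 \<le> \<delta>\<close> that(2)],
          of "(\<Prod>p\<in>T. a p) * (\<Prod>p\<in>S - T. b p)"]
      by (simp add: ab_nonneg prod_nonneg prod.distrib ac_simps)
    then have "(\<Sum>T | T \<subseteq> S \<and> real (\<Prod>T) \<le> real (\<Prod>S) / X. (\<Prod>p\<in>T. a p) * (\<Prod>p\<in>S - T. b p))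
        \<le> (\<Sum>T | T \<subseteq> S \<and> real (\<Prod>T) \<le> real (\<Prod>S) / X.
            X powr (-\<delta>) * ((\<Prod>p\<in>T. a p) * (\<Prod>p\<in>S - T. b p * real p powr \<delta>)))"
      by (intro sum_mono) auto
    also have "\<dots> \<le> (\<Sum>T\<in>Pow S. X powr (-\<delta>) * ((\<Prod>p\<in>T. a p) * (\<Prod>p\<in>S - T. b p * real p powr \<delta>)))"
      using fS by (intro sum_mono2) (auto intro!: mult_nonneg_nonneg prod_nonneg ab_nonneg)
    finally show "(\<Sum>T | T \<subseteq> S \<and> real (\<Prod>T) \<le> real (\<Prod>S) / X. (\<Prod>p\<in>T. a p) * (\<Prod>p\<in>S - T. b p))
        \<le> (\<Sum>T\<in>Pow S. X powr (-\<delta>) * ((\<Prod>p\<in>T. a p) * (\<Prod>p\<in>S - T. b p * real p powr \<delta>)))" .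
  qed
  also have "\<dots> = X powr (-\<delta>) * (\<Prod>p\<in>P. 1 + a p + b p * real p powr \<delta>)"
    by (simp add: prod_one_add_add[OF fin] sum_distrib_left)
  finally show ?thesis
    by (simp add: a_def b_def)
qed

lemma prod_one_add_add_le_exp:
  fixes a b c :: "'a \<Rightarrow> real"
  assumes "\<And>p. 0 \<le> a p" "\<And>p. 0 \<le> b p" "\<And>p. 0 \<le> c p"
  shows "(\<Prod>p\<in>P. 1 + a p + c p) \<le> exp (\<Sum>p\<in>P. c p) * (\<Prod>p\<in>P. 1 + a p + b p)"
proof (cases "finite P")
  case True
  have "(\<Prod>p\<in>P. 1 + a p + c p) \<le> (\<Prod>p\<in>P. exp (c p) * (1 + a p + b p))"
  proof (rule prod_mono)
    fix p
    have "1 + a p + c p \<le> (1 + c p) * (1 + a p + b p)"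
      using assms[of p] by (simp add: algebra_simps)
    also have "\<dots> \<le> exp (c p) * (1 + a p + b p)"
      using assms[of p] exp_ge_add_one_self[of "c p"] by (intro mult_right_mono) auto
    finally show "0 \<le> 1 + a p + c p \<and> 1 + a p + c p \<le> exp (c p) * (1 + a p + b p)"
      using assms[of p] by simp
  qed
  then show ?thesis
    using True by (simp add: prod.distrib exp_sum)
qed simp

lemma divisor_pair_sum_restricted_le:
  fixes X \<delta> :: real
  assumes "finite P" "\<forall>p\<in>P. prime (p::nat)" "\<And>p. F p \<noteq> 0 \<Longrightarrow> p \<in> P"
    and "\<And>p. 0 \<le> F p" "0 < X" "0 \<le> \<delta>"
  shows "divisor_pair_sum F s (\<lambda>n q. real q \<le> real n / X) \<le> X powr (-\<delta>)
      * exp (\<Sum>p\<in>P. F p * (real p / (real p + 1)) / real p powr s * real p powr \<delta>)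
      * divisor_pair_sum F s (\<lambda>_ _. True)"
  using order.trans[OF divisor_pair_sum_rankin[OF assms]
      mult_left_mono[OF prod_one_add_add_le_exp[where P = P]]] assms(4)
  by (simp add: divisor_pair_sum_unrestricted[OF assms(1-3)] mult.assoc)

lemma real_card_le_bound:
  assumes "S \<subseteq> {n::nat. 0 < n \<and> real n \<le> x}" "0 \<le> x"
  shows "finite S" "real (card S) \<le> x"
proof -
  have S_sub: "S \<subseteq> {1..nat \<lfloor>x\<rfloor>}"
    using assms(1) by (auto simp: le_nat_iff le_floor_iff)
  then show "finite S"
    using finite_subset by blast
  have "card S \<le> nat \<lfloor>x\<rfloor>"
    using card_mono[OF _ S_sub] by simp
  then show "real (card S) \<le> x"
    using assms(2) by linarith
qed

lemma smallo_if_eventually_le_vanishing_multiple: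
  fixes f g r :: "'a \<Rightarrow> real"
  assumes "eventually (\<lambda>x. norm (f x) \<le> r x * norm (g x)) F" and "(r \<longlongrightarrow> 0) F"
  shows "f \<in> o[F](g)"
proof (rule landau_o.smallI)
  fix c :: real assume "0 < c"
  with assms(2) have "eventually (\<lambda>x. r x < c) F"
    by (rule order_tendstoD(2))
  with assms(1) show "eventually (\<lambda>x. norm (f x) \<le> c * norm (g x)) F"
    by eventually_elim (smt (verit) mult_right_mono norm_ge_zero)
qed

context
  fixes A \<gamma> N :: real
  assumes A_pos: "0 < A" and N_gt_1: "1 < N"
    and e_le_lln: "exp 1 \<le> ln (ln N)"
    and A_div_lln_le: "A / ln (ln N) \<le> 1/2"
    and lln_powr_\<gamma>_le: "ln (ln N) powr \<gamma> \<le> ln (ln N) / 4"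
    and llln_le: "ln (ln (ln N)) \<le> ln (ln N) / 2"
begin

lemma lln_gt_1: "1 < ln (ln N)"
  using e_le_lln exp_ge_add_one_self[of 1] by linarith

lemma ln_N_gt_1: "1 < ln N"
proof -
  have "0 < ln N"
    using N_gt_1 by simp
  moreover have "0 < ln (ln N)"
    using lln_gt_1 by linarith
  ultimately show ?thesis
    using ln_gt_zero_iff by blast
qed

lemma llln_ge_1: "1 \<le> ln (ln (ln N))"
proof -
  have "ln (exp 1) \<le> ln (ln (ln N))"
    using e_le_lln lln_gt_1 by (subst ln_le_cancel_iff) auto
  then show ?thesis by simp
qed

lemma sig_bounds: "1/2 \<le> sig A N" "sig A N \<le> 1"
proof -
  have "0 < A / ln (ln N)"
    using A_pos lln_gt_1 by simp
  then show "1/2 \<le> sig A N" "sig A N \<le> 1"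
    using A_div_lln_le unfolding sig_def by linarith+
qed

lemma ln_mem_Pset:
  assumes "p \<in> Pset \<gamma> N"
  shows "1 + ln (ln N) + ln (ln (ln N)) < ln (real p)"
    and "ln (real p) \<le> 2 * ln (ln N)"
proof -
  have pos: "0 < ln N" "0 < ln (ln N)"
    using ln_N_gt_1 lln_gt_1 by auto
  have lo: "exp 1 * ln N * ln (ln N) < real p"
    and hi: "real p \<le> exp (ln (ln N) powr \<gamma>) * ln N * ln (ln N)"
    using assms by (auto simp: Pset_def)
  have "0 < exp 1 * ln N * ln (ln N)"
    using pos by simp
  with lo have "ln (exp 1 * ln N * ln (ln N)) < ln (real p)"
    by (subst ln_less_cancel_iff) auto
  then show "1 + ln (ln N) + ln (ln (ln N)) < ln (real p)"
    using pos by (simp add: ln_mult)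
  have "0 < real p"
    using \<open>0 < exp 1 * ln N * ln (ln N)\<close> lo by linarith
  with hi have "ln (real p) \<le> ln (exp (ln (ln N) powr \<gamma>) * ln N * ln (ln N))"
    by (subst ln_le_cancel_iff) auto
  moreover have "ln (exp (ln (ln N) powr \<gamma>) * ln N * ln (ln N))
      = ln (ln N) powr \<gamma> + ln (ln N) + ln (ln (ln N))"
    using pos by (simp add: ln_mult)
  ultimately show "ln (real p) \<le> 2 * ln (ln N)"
    using pos lln_powr_\<gamma>_le llln_le by linarith
qed

lemma prime_Pset: "\<forall>p\<in>Pset \<gamma> N. prime p"
  by (simp add: Pset_def)

lemma Pset_subset: "Pset \<gamma> N \<subseteq> {p. 0 < p \<and> real p \<le> exp (ln (ln N) powr \<gamma>) * ln N * ln (ln N)}"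
  by (auto simp: Pset_def prime_gt_0_nat)

lemma finite_Pset: "finite (Pset \<gamma> N)"
  and card_Pset_le: "real (card (Pset \<gamma> N)) \<le> exp (ln (ln N) powr \<gamma>) * ln N * ln (ln N)"
  using real_card_le_bound[OF Pset_subset] ln_N_gt_1 lln_gt_1 by simp_all

lemma fp_nonzero_imp_Pset: "fp A \<gamma> N p \<noteq> 0 \<Longrightarrow> p \<in> Pset \<gamma> N"
  by (simp add: fp_def split: if_splits)

lemma fp_nonneg: "0 \<le> fp A \<gamma> N p"
proof (cases "p \<in> Pset \<gamma> N")
  case True
  then have "0 < ln (real p) - ln (ln N) - ln (ln (ln N))"
    using ln_mem_Pset(1) by (smt (verit))
  then show ?thesis
    unfolding fp_def using True by (auto intro!: mult_nonneg_nonneg divide_nonneg_nonneg)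
qed (simp add: fp_def)

lemma fp_coefficient_le:
  "ln N powr (1 - sig A N) * ln (ln N) powr sig A N / ln (ln (ln N)) powr (1 - sig A N)
    \<le> ln N powr (1/2) * ln (ln N)"
proof -
  have "ln N powr (1 - sig A N) \<le> ln N powr (1/2)"
    using ln_N_gt_1 sig_bounds by (intro powr_mono) auto
  moreover have "ln (ln N) powr sig A N \<le> ln (ln N) powr 1"
    using lln_gt_1 sig_bounds by (intro powr_mono) auto
  ultimately have "ln N powr (1 - sig A N) * ln (ln N) powr sig A N \<le> ln N powr (1/2) * ln (ln N)"
    using lln_gt_1 by (simp add: mult_mono)
  moreover have "1 \<le> ln (ln (ln N)) powr (1 - sig A N)"
    using llln_ge_1 sig_bounds by (simp add: ge_one_powr_ge_zero)
  ultimately show ?thesis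
    using frac_le[of "ln N powr (1/2) * ln (ln N)" _ 1] lln_gt_1 by simp
qed

lemma fp_local_factor_le:
  assumes "p \<in> Pset \<gamma> N"
  shows "fp A \<gamma> N p * (real p / (real p + 1)) / real p powr sig A N * real p powr (1 / (2 * ln (ln N)))
    \<le> ln N powr (-1/2)"
proof -
  define L l \<sigma> where "L = ln N" and "l = ln (ln N)" and "\<sigma> = sig A N"
  define K where "K = L powr (1 - \<sigma>) * l powr \<sigma> / ln l powr (1 - \<sigma>)"
  define D where "D = ln (real p) - l - ln l"
  have L_pos: "0 < L" and l_pos: "0 < l"
    using ln_N_gt_1 lln_gt_1 by (auto simp: L_def l_def)
  have p_gt: "exp 1 * L * l < real p"
    using assms by (simp add: Pset_def L_def l_def)
  have p_ge_1: "1 \<le> real p"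
    using assms prime_ge_1_nat[of p] by (simp add: Pset_def)
  have D_ge_1: "1 \<le> D"
    using ln_mem_Pset(1)[OF assms] by (simp add: D_def l_def)
  have "real p = real p powr 1"
    using p_ge_1 by simp
  also have "\<dots> \<le> real p powr (\<sigma> + \<sigma>)"
    using p_ge_1 sig_bounds by (intro powr_mono) (auto simp: \<sigma>_def)
  also have "\<dots> = real p powr \<sigma> * real p powr \<sigma>"
    by (rule powr_add)
  also have "\<dots> \<le> real p powr \<sigma> * real p powr \<sigma> * D"
    using mult_left_mono[OF D_ge_1, of "real p powr \<sigma> * real p powr \<sigma>"] by simp
  finally have p_le: "real p \<le> real p powr \<sigma> * real p powr \<sigma> * D" .
  have "fp A \<gamma> N p / real p powr \<sigma> = K / (real p powr \<sigma> * real p powr \<sigma> * D)"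
    using assms by (simp add: fp_def K_def D_def L_def l_def \<sigma>_def)
  also have "\<dots> \<le> K / real p"
    using p_le p_ge_1 by (intro divide_left_mono) (auto simp: K_def)
  also have "\<dots> \<le> L powr (1/2) * l / real p"
    using fp_coefficient_le p_ge_1 by (intro divide_right_mono) (auto simp: K_def L_def l_def \<sigma>_def)
  finally have fp_le: "fp A \<gamma> N p / real p powr \<sigma> \<le> L powr (1/2) * l / real p" .
  have "ln (real p) / (2 * l) \<le> 1"
    using ln_mem_Pset(2)[OF assms] l_pos by (simp add: l_def)
  then have powr_le: "real p powr (1 / (2 * l)) \<le> exp 1"
    using p_ge_1 by (simp add: powr_def)
  have "fp A \<gamma> N p * (real p / (real p + 1)) / real p powr \<sigma> * real p powr (1 / (2 * l))
      = fp A \<gamma> N p / real p powr \<sigma> * (real p / (real p + 1)) * real p powr (1 / (2 * l))"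
    by simp
  also have "\<dots> \<le> L powr (1/2) * l / real p * 1 * exp 1"
    using fp_le powr_le fp_nonneg[of p] l_pos by (intro mult_mono) auto
  also have "\<dots> = L powr (1/2) * l * exp 1 / real p"
    by simp
  also have "\<dots> \<le> L powr (1/2) * l * exp 1 / (exp 1 * L * l)"
    using p_gt p_ge_1 L_pos l_pos by (intro divide_left_mono) (auto intro!: mult_pos_pos)
  also have "\<dots> = L powr (1/2) / L powr 1"
    using L_pos l_pos by simp
  also have "\<dots> = L powr (1/2 - 1)"
    by (simp only: powr_diff)
  finally show ?thesis
    by (simp add: L_def l_def \<sigma>_def)
qed

lemma sum_fp_local_factor_le:
  "(\<Sum>p\<in>Pset \<gamma> N. fp A \<gamma> N p * (real p / (real p + 1)) / real p powr sig A N
      * real p powr (1 / (2 * ln (ln N)))) \<le> ln N powr (3/4) * ln (ln N)"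
proof -
  define L l where "L = ln N" and "l = ln (ln N)"
  have L_pos: "0 < L" and l_pos: "0 < l"
    using ln_N_gt_1 lln_gt_1 by (auto simp: L_def l_def)
  have "exp (l powr \<gamma>) \<le> exp (ln L / 4)"
    using lln_powr_\<gamma>_le by (simp add: L_def l_def)
  also have "\<dots> = L powr (1/4)"
    using L_pos by (simp add: powr_def)
  finally have exp_le: "exp (l powr \<gamma>) \<le> L powr (1/4)" .
  have "(\<Sum>p\<in>Pset \<gamma> N. fp A \<gamma> N p * (real p / (real p + 1)) / real p powr sig A N
      * real p powr (1 / (2 * ln (ln N)))) \<le> real (card (Pset \<gamma> N)) * L powr (-1/2)"
    unfolding L_def by (rule sum_bounded_above) (rule fp_local_factor_le)
  also have "\<dots> \<le> exp (l powr \<gamma>) * L * l * L powr (-1/2)"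
    using card_Pset_le by (intro mult_right_mono) (auto simp: L_def l_def)
  also have "\<dots> \<le> L powr (1/4) * L powr 1 * L powr (-1/2) * l"
    using exp_le L_pos l_pos by (simp add: mult_right_mono)
  also have "\<dots> = L powr (1/4 + 1 + (-1/2)) * l"
    by (simp only: powr_add)
  also have "\<dots> = L powr (3/4) * l"
    by simp
  finally show ?thesis
    by (simp add: L_def l_def)
qed

lemma abs_SN_le:
  "\<bar>SN A \<gamma> \<epsilon> N\<bar> \<le> exp (ln N powr (3/4) * ln (ln N) - \<epsilon> * ln N / (2 * ln (ln N))) * \<bar>AN A \<gamma> N\<bar>"
proof -
  define F \<sigma> X \<delta> where "F = fp A \<gamma> N" and "\<sigma> = sig A N" and "X = N powr \<epsilon>"
    and "\<delta> = 1 / (2 * ln (ln N))"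
  define D where "D = (\<Sum>\<^sub>\<infinity>n. (fm A \<gamma> N n)\<^sup>2)"
  have SN: "SN A \<gamma> \<epsilon> N = divisor_pair_sum F \<sigma> (\<lambda>n q. real q \<le> real n / X) / D"
    by (simp add: SN_def divisor_pair_sum_def fm_eq_sqf_mult F_def \<sigma>_def X_def D_def)
  have AN: "AN A \<gamma> N = divisor_pair_sum F \<sigma> (\<lambda>_ _. True) / D"
    by (simp add: AN_def divisor_pair_sum_def fm_eq_sqf_mult F_def \<sigma>_def D_def)
  note F_facts = finite_Pset prime_Pset fp_nonzero_imp_Pset[folded F_def] fp_nonneg[folded F_def]
  have X_pos: "0 < X" and \<delta>_nonneg: "0 \<le> \<delta>"
    using N_gt_1 ln_N_gt_1 by (simp_all add: X_def \<delta>_def)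
  have "X powr (-\<delta>) = exp (- (\<epsilon> * ln N / (2 * ln (ln N))))"
    using N_gt_1 by (simp add: X_def \<delta>_def powr_powr powr_def)
  then have "X powr (-\<delta>) * exp (\<Sum>p\<in>Pset \<gamma> N. F p * (real p / (real p + 1)) / real p powr \<sigma> * real p powr \<delta>)
      \<le> exp (ln N powr (3/4) * ln (ln N) - \<epsilon> * ln N / (2 * ln (ln N)))"
    using sum_fp_local_factor_le by (simp add: F_def \<sigma>_def \<delta>_def flip: exp_add)
  then have "divisor_pair_sum F \<sigma> (\<lambda>n q. real q \<le> real n / X)
      \<le> exp (ln N powr (3/4) * ln (ln N) - \<epsilon> * ln N / (2 * ln (ln N))) * divisor_pair_sum F \<sigma> (\<lambda>_ _. True)"
    using divisor_pair_sum_restricted_le[OF F_facts X_pos \<delta>_nonneg, where s = \<sigma>]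
      divisor_pair_sum_nonneg[OF F_facts, where s = \<sigma> and C = "\<lambda>_ _. True"]
    by (meson mult_right_mono order.trans)
  moreover have "0 \<le> divisor_pair_sum F \<sigma> (\<lambda>n q. real q \<le> real n / X)"
    "0 \<le> divisor_pair_sum F \<sigma> (\<lambda>_ _. True)" "0 \<le> D"
    using F_facts by (simp_all add: divisor_pair_sum_nonneg D_def infsum_nonneg)
  ultimately show ?thesis
    unfolding SN AN by (simp add: divide_right_mono)
qed

end

theorem proposition3p3:
  fixes A \<gamma> \<epsilon> :: real
  assumes "A > 0" and "0 < \<gamma>" and "\<gamma> < 1 / (exp 1 - 1)" and "\<epsilon> > 0"
  shows "(\<lambda>N. SN A \<gamma> \<epsilon> N) \<in> o[at_top](\<lambda>N. AN A \<gamma> N)"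
proof (rule smallo_if_eventually_le_vanishing_multiple)
  have "1 / (exp 1 - 1) \<le> (1::real)"
    using exp_ge_add_one_self[of 1] by simp
  then have "\<gamma> < 1"
    using assms(3) by linarith
  then have "eventually (\<lambda>N. 1 < N \<and> exp 1 \<le> ln (ln N) \<and> A / ln (ln N) \<le> 1/2
      \<and> ln (ln N) powr \<gamma> \<le> ln (ln N) / 4 \<and> ln (ln (ln N)) \<le> ln (ln N) / 2) at_top"
    by (intro eventually_conj; real_asymp)
  then show "eventually (\<lambda>N. norm (SN A \<gamma> \<epsilon> N)
      \<le> exp (ln N powr (3/4) * ln (ln N) - \<epsilon> * ln N / (2 * ln (ln N))) * norm (AN A \<gamma> N)) at_top"
    by eventually_elim (use abs_SN_le[OF assms(1)] in auto)
  show "((\<lambda>N. exp (ln N powr (3/4) * ln (ln N) - \<epsilon> * ln N / (2 * ln (ln N)))) \<longlongrightarrow> 0) at_top"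
    using assms(4) by real_asymp
qed

end
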